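(* Let $\mathfrak g=\mathfrak k+_\rho V$ be the semidirect sum of a finite-dimensional real Lie algebra $\mathfrak k$ and a commutative ideal $V$ via a representation $\rho:\mathfrak k\to\operatorname{End}(V)$. Let $f_1,\dots,f_l$ be polynomials on $\mathfrak g^*$ each satisfying $f_i(M,v)=f_i(M+L,v)$ for all $(M,v)\in\mathfrak g^*$ and $L\in\mathrm{St}_{\rho^*}(v)^\perp$, and write $f_i(M,v)=f_{i,v}(\pi_v(M))$. Suppose that for generic $v\in V^*$ the functions $f_{1,v},\dots,f_{l,v}$ pairwise commute with respect to the Lie–Poisson bracket on $\mathrm{St}_{\rho^*}(v)^*$ and form a complete commutative set in $S(\mathrm{St}_{\rho^*}(v))$. Then $\{f_1,\dots,f_l\}\cup V$ (elements of $V$ viewed as linear functions on $\mathfrak g^*$) is a complete commutative set in $S(\mathfrak g)$.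
   Context: Elements of $\mathfrak g^*=\mathfrak k^*\oplus V^*$ are pairs $(M,v)$. $\rho^*:\mathfrak k\to\operatorname{End}(V^* )$ is the dual representation, $\mathrm{St}_{\rho^*}(v)=\{X\in\mathfrak k\mid\rho^*(X)v=0\}$, $\mathrm{St}_{\rho^*}(v)^\perp\subset\mathfrak k^*$ its annihilator, $\pi_v:\mathfrak k^*\to\mathrm{St}_{\rho^*}(v)^*$ restriction. For a Lie algebra $\mathfrak l$, $S(\mathfrak l)$ is the polynomial algebra on $\mathfrak l^*$ with Lie–Poisson bracket $\{f,g\}(x)=\langle x,[df(x),dg(x)]\rangle$, and $\Phi_x(\xi,\eta)=\langle x,[\xi,\eta]\rangle$. A set of polynomials in $S(\mathfrak l)$ is a complete commutative set if its elements pairwise Poisson-commute and, at generic $x\in\mathfrak l^*$, their differentials span a maximal $\Phi_x$-isotropic subspace of $\mathfrak l$ (equivalently, they generate a subalgebra of transcendence degree $\frac12(\dim\mathfrak l+\operatorname{ind}\mathfrak l)$, where $\operatorname{ind}\mathfrak l$ is the generic corank of $\Phi_x$). *)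

theory Defs
  imports "HOL-Analysis.Analysis"
begin

text \<open>Conventions: finite-dimensional real vector spaces are euclidean_space types;
 duals are identified with the spaces themselves via the inner product
 (pairing of M in k* with X in k is M \<bullet> X).\<close>

definition lie_algebra :: "('k::euclidean_space \<Rightarrow> 'k \<Rightarrow> 'k) \<Rightarrow> bool" where
  "lie_algebra br \<longleftrightarrow> bilinear br \<and> (\<forall>x. br x x = 0) \<and>
     (\<forall>x y z. br x (br y z) + br y (br z x) + br z (br x y) = 0)"

definition lie_rep :: "('k::euclidean_space \<Rightarrow> 'k \<Rightarrow> 'k) \<Rightarrow> ('k \<Rightarrow> 'v::euclidean_space \<Rightarrow> 'v) \<Rightarrow> bool" where
  "lie_rep br \<rho> \<longleftrightarrow> (\<forall>a. linear (\<lambda>X. \<rho> X a)) \<and> (\<forall>X. linear (\<rho> X)) \<and>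
     (\<forall>X Y a. \<rho> (br X Y) a = \<rho> X (\<rho> Y a) - \<rho> Y (\<rho> X a))"

definition sd_br :: "('k::euclidean_space \<Rightarrow> 'k \<Rightarrow> 'k) \<Rightarrow> ('k \<Rightarrow> 'v::euclidean_space \<Rightarrow> 'v)
     \<Rightarrow> 'k \<times> 'v \<Rightarrow> 'k \<times> 'v \<Rightarrow> 'k \<times> 'v" where
  "sd_br br \<rho> x y = (br (fst x) (fst y), \<rho> (fst x) (snd y) - \<rho> (fst y) (snd x))"

definition dual_rep :: "('k::euclidean_space \<Rightarrow> 'v::euclidean_space \<Rightarrow> 'v) \<Rightarrow> 'k \<Rightarrow> 'v \<Rightarrow> 'v" where
  "dual_rep \<rho> X = (\<lambda>v. - adjoint (\<rho> X) v)"

definition stab :: "('k::euclidean_space \<Rightarrow> 'v::euclidean_space \<Rightarrow> 'v) \<Rightarrow> 'v \<Rightarrow> 'k set" where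
  "stab \<rho> v = {X. dual_rep \<rho> X v = 0}"

definition annihilator :: "'k::euclidean_space set \<Rightarrow> 'k set" where
  "annihilator S = {L. \<forall>X\<in>S. L \<bullet> X = 0}"

text \<open>Differential df(x), as an element of the Lie algebra (gradient).\<close>
definition grad :: "('a::euclidean_space \<Rightarrow> real) \<Rightarrow> 'a \<Rightarrow> 'a" where
  "grad f x = (\<Sum>b\<in>Basis. frechet_derivative f (at x) b *\<^sub>R b)"

definition lp_bracket :: "('a::euclidean_space \<Rightarrow> 'a \<Rightarrow> 'a) \<Rightarrow> ('a \<Rightarrow> real) \<Rightarrow> ('a \<Rightarrow> real) \<Rightarrow> 'a \<Rightarrow> real" where
  "lp_bracket br f g x = x \<bullet> br (grad f x) (grad g x)"

definition generic_on :: "'a::euclidean_space set \<Rightarrow> ('a \<Rightarrow> bool) \<Rightarrow> bool" where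
  "generic_on L P \<longleftrightarrow> (\<exists>p::'a \<Rightarrow> real. polynomial_function p \<and> (\<exists>y\<in>L. p y \<noteq> 0) \<and>
      (\<forall>y\<in>L. p y \<noteq> 0 \<longrightarrow> P y))"

definition isotropic :: "('a::euclidean_space \<Rightarrow> 'a \<Rightarrow> 'a) \<Rightarrow> 'a \<Rightarrow> 'a set \<Rightarrow> bool" where
  "isotropic br x W \<longleftrightarrow> (\<forall>\<xi>\<in>W. \<forall>\<eta>\<in>W. x \<bullet> br \<xi> \<eta> = 0)"

definition maximal_isotropic :: "('a::euclidean_space \<Rightarrow> 'a \<Rightarrow> 'a) \<Rightarrow> 'a set \<Rightarrow> 'a \<Rightarrow> 'a set \<Rightarrow> bool" where
  "maximal_isotropic br L x W \<longleftrightarrow> subspace W \<and> W \<subseteq> L \<and> isotropic br x W \<and>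
     (\<forall>U. subspace U \<and> W \<subseteq> U \<and> U \<subseteq> L \<and> isotropic br x U \<longrightarrow> U = W)"

text \<open>Complete commutative set in S(l), where l = L is a Lie subalgebra (subspace) of the
 ambient algebra with bracket br, and l* is identified with L via the inner product.
 Functions on l* are represented by their pull-backs along the orthogonal projection onto L.\<close>
definition complete_comm_set :: "('a::euclidean_space \<Rightarrow> 'a \<Rightarrow> 'a) \<Rightarrow> 'a set \<Rightarrow> ('a \<Rightarrow> real) set \<Rightarrow> bool" where
  "complete_comm_set br L F \<longleftrightarrow>
     (\<forall>f\<in>F. polynomial_function f) \<and>
     (\<forall>f\<in>F. \<forall>g\<in>F. \<forall>x\<in>L. lp_bracket br f g x = 0) \<and>
     generic_on L (\<lambda>x. maximal_isotropic br L x (span ((\<lambda>f. grad f x) ` F)))"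

end

theory Submission
  imports Defs "Jordan_Normal_Form.Determinant"
begin

text \<open>The differential of each \<open>f\<^sub>i\<close> at \<open>(M, v)\<close> has its \<open>k\<close>-component in
  \<open>St(v)\<close>, and that component does not change when \<open>M\<close> is translated by
  \<open>St(v)\<^sup>\<bottom>\<close>. Hence \<open>{f\<^sub>i, f\<^sub>j}(M, v)\<close> is the Lie--Poisson bracket of
  \<open>f\<^sub>i\<^sub>,\<^sub>v, f\<^sub>j\<^sub>,\<^sub>v\<close> at the projection of \<open>M\<close> to \<open>St(v)\<^sup>*\<close>; it vanishes for generic
  \<open>v\<close>, hence identically, while brackets with linear functions on \<open>V\<^sup>*\<close> vanish because
  \<open>St(v)\<close> kills \<open>v\<close>.

  For completeness, the span \<open>W(x)\<close> of the differentials is isotropic for \<open>\<Phi>\<^sub>x\<close>, and the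
  ranks of polynomial families of vectors are generically at least their value at any given
  point. So it suffices to find one point \<open>x\<close> at which \<open>W(x)\<close> contains its own
  \<open>\<Phi>\<^sub>x\<close>-orthogonal. Take \<open>x = (y, v)\<close> with \<open>v\<close> generic and \<open>y \<in> St(v)\<^sup>*\<close> generic:
  if \<open>(X, a)\<close> is \<open>\<Phi>\<^sub>x\<close>-orthogonal to \<open>W(x)\<close>, pairing with \<open>V\<close> gives \<open>X \<in> St(v)\<close>, and
  then \<open>X\<close> is orthogonal to the maximal isotropic span of the \<open>df\<^sub>i\<^sub>,\<^sub>v(y)\<close>, so it lies
  in that span.\<close>

no_notation Matrix.scalar_prod (infix \<open>\<bullet>\<close> 70)
hide_const (open) Matrix.orthogonal

subsection \<open>Gradients of polynomial functions\<close>

lemma real_polynomial_function_has_derivative: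
  fixes p :: "'a::euclidean_space \<Rightarrow> real"
  assumes "real_polynomial_function p"
  shows "\<exists>D. (\<forall>x. (p has_derivative D x) (at x)) \<and> (\<forall>h. real_polynomial_function (\<lambda>x. D x h))"
  using assms
proof (induction p rule: real_polynomial_function.induct)
  case (linear f)
  then show ?case
    by (intro exI[of _ "\<lambda>x. f"]) (auto intro: bounded_linear_imp_has_derivative)
next
  case (const c)
  show ?case by (intro exI[of _ "\<lambda>x h. 0"]) auto
next
  case (add f g)
  then obtain D1 D2 where "\<forall>x. (f has_derivative D1 x) (at x)" "\<forall>h. real_polynomial_function (\<lambda>x. D1 x h)"
    "\<forall>x. (g has_derivative D2 x) (at x)" "\<forall>h. real_polynomial_function (\<lambda>x. D2 x h)"
    by blast
  then show ?case
    by (intro exI[of _ "\<lambda>x h. D1 x h + D2 x h"]) (auto intro!: has_derivative_add)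
next
  case (mult f g)
  then obtain D1 D2 where D1: "\<forall>x. (f has_derivative D1 x) (at x)" "\<forall>h. real_polynomial_function (\<lambda>x. D1 x h)"
    and D2: "\<forall>x. (g has_derivative D2 x) (at x)" "\<forall>h. real_polynomial_function (\<lambda>x. D2 x h)"
    by blast
  show ?case
  proof (intro exI[of _ "\<lambda>x h. f x * D2 x h + D1 x h * g x"] conjI allI)
    show "((\<lambda>x. f x * g x) has_derivative (\<lambda>h. f x * D2 x h + D1 x h * g x)) (at x)" for x
      using D1(1) D2(1) by (auto intro!: has_derivative_mult)
    show "real_polynomial_function (\<lambda>x. f x * D2 x h + D1 x h * g x)" for h
      using D1(2) D2(2) mult.hyps by (intro real_polynomial_function.intros(3,4)) auto
  qed
qed

lemma linear_eq_inner_Basis_sum: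
  fixes D :: "'a::euclidean_space \<Rightarrow> real"
  assumes "linear D"
  shows "D h = (\<Sum>b\<in>Basis. D b *\<^sub>R b) \<bullet> h"
proof -
  have "D h = D (\<Sum>b\<in>Basis. (h \<bullet> b) *\<^sub>R b)"
    by (simp add: euclidean_representation)
  also have "\<dots> = (\<Sum>b\<in>Basis. (h \<bullet> b) * D b)"
    using assms by (simp add: linear_sum linear_scale)
  also have "\<dots> = (\<Sum>b\<in>Basis. D b *\<^sub>R b) \<bullet> h"
    by (simp add: inner_sum_left inner_sum_right mult.commute inner_commute)
  finally show ?thesis .
qed

lemma grad_eq_Basis_sum:
  assumes "(f has_derivative D) (at x)"
  shows "grad f x = (\<Sum>b\<in>Basis. D b *\<^sub>R b)"
  using frechet_derivative_at[OF assms] by (simp add: grad_def)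

lemma grad_eqI:
  assumes "(g has_derivative (\<lambda>h. a \<bullet> h)) (at x)"
  shows "grad g x = a"
  using grad_eq_Basis_sum[OF assms] by (simp add: euclidean_representation)

lemma has_derivative_grad_inner:
  fixes f :: "'a::euclidean_space \<Rightarrow> real"
  assumes "(f has_derivative D) (at x)"
  shows "(f has_derivative (\<lambda>h. grad f x \<bullet> h)) (at x)"
proof -
  have "D h = grad f x \<bullet> h" for h
    using linear_eq_inner_Basis_sum[OF has_derivative_linear[OF assms], of h] grad_eq_Basis_sum[OF assms]
    by simp
  then have "D = (\<lambda>h. grad f x \<bullet> h)"
    by (simp add: fun_eq_iff)
  with assms show ?thesis by simp
qed

lemma polynomial_function_has_derivative_grad:
  fixes f :: "'a::euclidean_space \<Rightarrow> real"
  assumes "polynomial_function f"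
  shows "(f has_derivative (\<lambda>h. grad f x \<bullet> h)) (at x)"
proof -
  obtain D where "\<forall>x. (f has_derivative D x) (at x)"
    using assms real_polynomial_function_has_derivative real_polynomial_function_eq by blast
  then show ?thesis
    by (blast intro: has_derivative_grad_inner)
qed

lemma polynomial_function_grad:
  fixes f :: "'a::euclidean_space \<Rightarrow> real"
  assumes "polynomial_function f"
  shows "polynomial_function (grad f)"
proof -
  obtain D where D: "\<forall>x. (f has_derivative D x) (at x)" "\<forall>h. real_polynomial_function (\<lambda>x. D x h)"
    using assms real_polynomial_function_has_derivative real_polynomial_function_eq by blast
  have "grad f = (\<lambda>x. \<Sum>b\<in>Basis. D x b *\<^sub>R b)"
    using D(1) by (simp add: fun_eq_iff grad_eq_Basis_sum)
  moreover have "polynomial_function (\<lambda>x. \<Sum>b\<in>Basis. D x b *\<^sub>R b)"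
    using D(2) by (intro polynomial_function_sum polynomial_function_mult)
      (auto simp: real_polynomial_function_eq)
  ultimately show ?thesis by simp
qed

lemma has_derivative_fst_grad:
  fixes f :: "'a::euclidean_space \<times> 'b::euclidean_space \<Rightarrow> real"
  assumes "polynomial_function f"
  shows "((\<lambda>M. f (M, v)) has_derivative (\<lambda>h. fst (grad f (M, v)) \<bullet> h)) (at M)"
proof -
  have "((\<lambda>M. (M, v)) has_derivative (\<lambda>h. (h, 0))) (at M)"
    by (auto intro!: derivative_eq_intros)
  from diff_chain_at[OF this polynomial_function_has_derivative_grad[OF assms]]
  show ?thesis by (simp add: o_def inner_Pair_0)
qed

lemma grad_Pair_fst:
  fixes f :: "'a::euclidean_space \<times> 'b::euclidean_space \<Rightarrow> real"
  assumes "polynomial_function f"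
  shows "grad (\<lambda>M. f (M, v)) M = fst (grad f (M, v))"
  by (rule grad_eqI[OF has_derivative_fst_grad[OF assms]])

lemma grad_inner_snd:
  "grad (\<lambda>x::'a::euclidean_space \<times> 'b::euclidean_space. snd x \<bullet> a) x = (0, a)"
proof (rule grad_eqI)
  have "bounded_linear (\<lambda>x::'a \<times> 'b. snd x \<bullet> a)"
    by (intro bounded_linear_compose[OF bounded_linear_inner_left bounded_linear_snd])
  then show "((\<lambda>x. snd x \<bullet> a) has_derivative (\<lambda>h. (0, a) \<bullet> h)) (at x)"
    by (auto dest: bounded_linear_imp_has_derivative simp: inner_Pair_0 inner_commute)
qed

subsection \<open>Polynomial functions and generic points\<close>

lemma polynomial_function_bilinear:
  fixes B :: "'a::euclidean_space \<Rightarrow> 'b::euclidean_space \<Rightarrow> 'c::real_normed_vector"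
    and f :: "'x::real_normed_vector \<Rightarrow> 'a" and g :: "'x \<Rightarrow> 'b"
  assumes B: "bilinear B" and "polynomial_function f" "polynomial_function g"
  shows "polynomial_function (\<lambda>x. B (f x) (g x))"
proof -
  have "B (f x) (g x) = (\<Sum>(b, c)\<in>Basis \<times> Basis. ((f x \<bullet> b) * (g x \<bullet> c)) *\<^sub>R B b c)" for x
  proof -
    have "B (f x) (g x) = B (\<Sum>b\<in>Basis. (f x \<bullet> b) *\<^sub>R b) (\<Sum>c\<in>Basis. (g x \<bullet> c) *\<^sub>R c)"
      by (simp add: euclidean_representation)
    also have "\<dots> = (\<Sum>(b, c)\<in>Basis \<times> Basis. B ((f x \<bullet> b) *\<^sub>R b) ((g x \<bullet> c) *\<^sub>R c))"
      by (rule bilinear_sum[OF B])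
    also have "\<dots> = (\<Sum>(b, c)\<in>Basis \<times> Basis. ((f x \<bullet> b) * (g x \<bullet> c)) *\<^sub>R B b c)"
      by (intro sum.cong refl) (auto simp: bilinear_lmul[OF B] bilinear_rmul[OF B])
    finally show ?thesis .
  qed
  moreover have "polynomial_function (\<lambda>x. \<Sum>(b, c)\<in>Basis \<times> Basis. ((f x \<bullet> b) * (g x \<bullet> c)) *\<^sub>R B b c)"
  proof (intro polynomial_function_sum)
    fix bc :: "'a \<times> 'b"
    have "polynomial_function (\<lambda>x. ((f x \<bullet> fst bc) * (g x \<bullet> snd bc)) *\<^sub>R B (fst bc) (snd bc))"
      using polynomial_function_mult[OF polynomial_function_inner[OF assms(2)] polynomial_function_inner[OF assms(3)]]
      by (intro polynomial_function_mult) auto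
    then show "polynomial_function (\<lambda>x. case bc of (b, c) \<Rightarrow> ((f x \<bullet> b) * (g x \<bullet> c)) *\<^sub>R B b c)"
      by (simp add: case_prod_beta)
  qed simp
  ultimately show ?thesis by simp
qed

lemma polynomial_function_inner_fun:
  fixes f g :: "'x::real_normed_vector \<Rightarrow> 'a::euclidean_space"
  assumes "polynomial_function f" "polynomial_function g"
  shows "polynomial_function (\<lambda>x. f x \<bullet> g x)"
  using polynomial_function_bilinear[OF _ assms] bounded_bilinear_inner
  by (simp add: bilinear_conv_bounded_bilinear)

lemma generic_on_mono:
  "generic_on L P \<Longrightarrow> (\<And>x. P x \<Longrightarrow> Q x) \<Longrightarrow> generic_on L Q"
  unfolding generic_on_def by blast

lemma generic_on_UNIV_snd:
  assumes "generic_on UNIV P"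
  shows "generic_on (UNIV :: ('a::euclidean_space \<times> 'b::euclidean_space) set) (\<lambda>x. P (snd x))"
proof -
  obtain q :: "'b \<Rightarrow> real" and y where q: "polynomial_function q" "q y \<noteq> 0" "\<And>y. q y \<noteq> 0 \<Longrightarrow> P y"
    using assms unfolding generic_on_def by blast
  moreover have "polynomial_function (q \<circ> snd)"
    using polynomial_function_compose[OF polynomial_function_bounded_linear[OF bounded_linear_snd] q(1)] .
  ultimately show ?thesis
    unfolding generic_on_def by (auto intro!: exI[of _ "q \<circ> snd"] bexI[of _ "(0, y)"])
qed

text \<open>A polynomial vanishing off the zero set of a nonzero polynomial \<open>q\<close> vanishes everywhere:
  on the line through \<open>z\<close> and a point where \<open>q \<noteq> 0\<close>, it has infinitely many roots.\<close>

lemma polynomial_function_eq_0_if_generic_on: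
  fixes g :: "'a::euclidean_space \<Rightarrow> real"
  assumes "polynomial_function g" and "generic_on UNIV (\<lambda>x. g x = 0)"
  shows "g z = 0"
proof -
  obtain q :: "'a \<Rightarrow> real" and y where q: "polynomial_function q" "q y \<noteq> 0" "\<And>x. q x \<noteq> 0 \<Longrightarrow> g x = 0"
    using assms(2) unfolding generic_on_def by blast
  define line where "line t = z + t *\<^sub>R (y - z)" for t :: real
  have "polynomial_function line"
    unfolding line_def by (intro polynomial_function_add polynomial_function_mult) auto
  then have "real_polynomial_function (g \<circ> line)" "real_polynomial_function (q \<circ> line)"
    using assms(1) q(1) by (simp_all add: real_polynomial_function_eq polynomial_function_compose)
  then obtain a n c m where "g \<circ> line = (\<lambda>t. \<Sum>i\<le>n. a i * t ^ i)"
    and "q \<circ> line = (\<lambda>t. \<Sum>i\<le>m. c i * t ^ i)"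
    unfolding real_polynomial_function_iff_sum by blast
  then have a: "g (line t) = (\<Sum>i\<le>n. a i * t ^ i)" and c: "q (line t) = (\<Sum>i\<le>m. c i * t ^ i)" for t
    by (simp_all add: fun_eq_iff)
  have "\<exists>i\<le>m. c i \<noteq> 0"
  proof (rule ccontr)
    assume "\<not> ?thesis"
    then have "q (line 1) = 0" by (simp add: c)
    with q(2) show False by (simp add: line_def)
  qed
  then have "finite {t. q (line t) = 0}"
    using polyfun_finite_roots[of c m] by (simp add: c)
  then have "infinite (UNIV - {t. q (line t) = 0})"
    using Diff_infinite_finite infinite_UNIV_char_0 by blast
  moreover have "UNIV - {t. q (line t) = 0} \<subseteq> {t. (\<Sum>i\<le>n. a i * t ^ i) = 0}"
    using q(3) by (auto simp flip: a)
  ultimately have "infinite {t. (\<Sum>i\<le>n. a i * t ^ i) = 0}"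
    using finite_subset by blast
  then have "\<forall>i\<le>n. a i = 0"
    using polyfun_finite_roots[of a n] by blast
  then show ?thesis
    using a[of 0] by (simp add: line_def)
qed

subsection \<open>Generic lower semicontinuity of the rank\<close>

lemma inj_on_independent_image_iff:
  fixes w :: "nat \<Rightarrow> 'a::real_vector"
  shows "inj_on w {..<s} \<and> independent (w ` {..<s}) \<longleftrightarrow>
    (\<forall>c. (\<Sum>k<s. c k *\<^sub>R w k) = 0 \<longrightarrow> (\<forall>k<s. c k = 0))"
proof
  assume "inj_on w {..<s} \<and> independent (w ` {..<s})"
  then have inj: "inj_on w {..<s}" and ind: "independent (w ` {..<s})" by blast+
  show "\<forall>c. (\<Sum>k<s. c k *\<^sub>R w k) = 0 \<longrightarrow> (\<forall>k<s. c k = 0)"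
  proof (intro allI impI)
    fix c k assume c: "(\<Sum>k<s. c k *\<^sub>R w k) = 0" and "k < s"
    define d where "d u = c (inv_into {..<s} w u)" for u
    have "(\<Sum>u\<in>w ` {..<s}. d u *\<^sub>R u) = (\<Sum>k<s. c k *\<^sub>R w k)"
      by (simp add: sum.reindex[OF inj] d_def inv_into_f_f[OF inj])
    then have "d (w k) = 0"
      using c \<open>k < s\<close> independentD[OF ind, of "w ` {..<s}" d] by auto
    then show "c k = 0"
      using \<open>k < s\<close> by (simp add: d_def inv_into_f_f[OF inj])
  qed
next
  assume h: "\<forall>c. (\<Sum>k<s. c k *\<^sub>R w k) = 0 \<longrightarrow> (\<forall>k<s. c k = 0)"
  have inj: "inj_on w {..<s}"
  proof (rule inj_onI, rule ccontr)
    fix i j assume ij: "i \<in> {..<s}" "j \<in> {..<s}" "w i = w j" "i \<noteq> j"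
    define c where "c k = (if k = i then 1 else if k = j then -1 else (0::real))" for k
    have "(\<Sum>k<s. c k *\<^sub>R w k) = (\<Sum>k\<in>{i, j}. c k *\<^sub>R w k)"
      using ij by (intro sum.mono_neutral_right) (auto simp: c_def)
    also have "\<dots> = 0"
      using ij by (simp add: c_def)
    finally have "c i = 0"
      using h ij(1) by auto
    then show False by (simp add: c_def)
  qed
  moreover have "independent (w ` {..<s})"
  proof (rule independent_if_scalars_zero)
    fix d u assume d: "(\<Sum>u\<in>w ` {..<s}. d u *\<^sub>R u) = 0" and "u \<in> w ` {..<s}"
    have "(\<Sum>k<s. d (w k) *\<^sub>R w k) = 0"
      using d by (simp add: sum.reindex[OF inj])
    with h \<open>u \<in> w ` {..<s}\<close> show "d u = 0" by auto
  qed simp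
  ultimately show "inj_on w {..<s} \<and> independent (w ` {..<s})" ..
qed

lemma Gram_mult_vec_nth:
  fixes w :: "nat \<Rightarrow> 'a::real_inner"
  assumes "i < s"
  shows "(Matrix.mat s s (\<lambda>(i, j). w i \<bullet> w j) *\<^sub>v Matrix.vec s c) $ i = w i \<bullet> (\<Sum>j<s. c j *\<^sub>R w j)"
  using assms by (simp add: scalar_prod_def inner_sum_right lessThan_atLeast0 mult.commute)

lemma det_Gram_eq_0_iff:
  fixes w :: "nat \<Rightarrow> 'a::real_inner"
  shows "Determinant.det (Matrix.mat s s (\<lambda>(i, j). w i \<bullet> w j)) = 0 \<longleftrightarrow>
    (\<exists>c. (\<Sum>j<s. c j *\<^sub>R w j) = 0 \<and> (\<exists>j<s. c j \<noteq> 0))"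
proof -
  let ?G = "Matrix.mat s s (\<lambda>(i, j). w i \<bullet> w j)"
  have kernel: "?G *\<^sub>v Matrix.vec s c = 0\<^sub>v s \<longleftrightarrow> (\<Sum>j<s. c j *\<^sub>R w j) = 0" for c
  proof
    assume "?G *\<^sub>v Matrix.vec s c = 0\<^sub>v s"
    then have "w i \<bullet> (\<Sum>j<s. c j *\<^sub>R w j) = 0" if "i < s" for i
      using Gram_mult_vec_nth[OF that, of w c] \<open>?G *\<^sub>v Matrix.vec s c = 0\<^sub>v s\<close> that by simp
    then have "(\<Sum>j<s. c j *\<^sub>R w j) \<bullet> (\<Sum>j<s. c j *\<^sub>R w j) = 0"
      by (simp add: inner_sum_left)
    then show "(\<Sum>j<s. c j *\<^sub>R w j) = 0" by simp
  next
    assume sum0: "(\<Sum>j<s. c j *\<^sub>R w j) = 0"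
    show "?G *\<^sub>v Matrix.vec s c = 0\<^sub>v s"
    proof (rule eq_vecI)
      fix i assume "i < dim_vec (0\<^sub>v s)"
      then show "(?G *\<^sub>v Matrix.vec s c) $ i = 0\<^sub>v s $ i"
        using Gram_mult_vec_nth[of i s w c] sum0 by simp
    qed simp
  qed
  have nonzero: "Matrix.vec s c \<noteq> 0\<^sub>v s \<longleftrightarrow> (\<exists>j<s. c j \<noteq> 0)" for c
    by (auto simp: Matrix.vec_eq_iff)
  have "Determinant.det ?G = 0 \<longleftrightarrow> (\<exists>v. v \<in> carrier_vec s \<and> v \<noteq> 0\<^sub>v s \<and> ?G *\<^sub>v v = 0\<^sub>v s)"
    by (rule det_0_iff_vec_prod_zero) simp
  also have "\<dots> \<longleftrightarrow> (\<exists>c. Matrix.vec s c \<noteq> 0\<^sub>v s \<and> ?G *\<^sub>v Matrix.vec s c = 0\<^sub>v s)"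
  proof safe
    fix v assume "v \<in> carrier_vec s" "v \<noteq> 0\<^sub>v s" "?G *\<^sub>v v = 0\<^sub>v s"
    moreover from \<open>v \<in> carrier_vec s\<close> have "v = Matrix.vec s (\<lambda>j. v $ j)" by auto
    ultimately show "\<exists>c. Matrix.vec s c \<noteq> 0\<^sub>v s \<and> ?G *\<^sub>v Matrix.vec s c = 0\<^sub>v s" by metis
  qed (use vec_carrier in blast)
  finally show ?thesis
    using kernel nonzero by blast
qed

text \<open>The Gram determinant of the family is the required polynomial.\<close>

lemma generic_linear_independence:
  fixes u :: "nat \<Rightarrow> 'x::euclidean_space \<Rightarrow> 'a::euclidean_space"
  assumes poly: "\<And>j. j < s \<Longrightarrow> polynomial_function (u j)"
    and indep: "\<And>c. (\<Sum>j<s. c j *\<^sub>R u j x0) = 0 \<Longrightarrow> \<forall>j<s. c j = 0"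
  shows "\<exists>p::'x \<Rightarrow> real. polynomial_function p \<and> p x0 \<noteq> 0 \<and>
    (\<forall>x c. p x \<noteq> 0 \<longrightarrow> (\<Sum>j<s. c j *\<^sub>R u j x) = 0 \<longrightarrow> (\<forall>j<s. c j = 0))"
proof -
  define p where "p x = Determinant.det (Matrix.mat s s (\<lambda>(i, j). u i x \<bullet> u j x))" for x
  have "p = (\<lambda>x. \<Sum>\<pi>\<in>{\<pi>. \<pi> permutes {0..<s}}. signof \<pi> * (\<Prod>i=0..<s. u i x \<bullet> u (\<pi> i) x))"
  proof
    fix x
    show "p x = (\<Sum>\<pi>\<in>{\<pi>. \<pi> permutes {0..<s}}. signof \<pi> * (\<Prod>i=0..<s. u i x \<bullet> u (\<pi> i) x))"
      unfolding p_def det_def'[OF mat_carrier]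
    proof (intro sum.cong refl arg_cong2[where f = "(*)"] prod.cong)
      fix \<pi> i assume "\<pi> \<in> {\<pi>. \<pi> permutes {0..<s}}" "i \<in> {0..<s}"
      then show "Matrix.mat s s (\<lambda>(i, j). u i x \<bullet> u j x) $$ (i, \<pi> i) = u i x \<bullet> u (\<pi> i) x"
        using permutes_in_image by fastforce
    qed
  qed
  moreover have "real_polynomial_function
      (\<lambda>x. \<Sum>\<pi>\<in>{\<pi>. \<pi> permutes {0..<s}}. signof \<pi> * (\<Prod>i=0..<s. u i x \<bullet> u (\<pi> i) x))"
  proof (intro real_polynomial_function_sum real_polynomial_function.intros(2,4) real_polynomial_function_prod)
    fix \<pi> i assume "\<pi> \<in> {\<pi>. \<pi> permutes {0..<s}}" "i \<in> {0..<s}"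
    then have "i < s" "\<pi> i < s" using permutes_in_image by fastforce+
    then show "real_polynomial_function (\<lambda>x. u i x \<bullet> u (\<pi> i) x)"
      by (simp add: real_polynomial_function_eq polynomial_function_inner_fun poly)
  qed (simp_all add: finite_permutations)
  ultimately have "polynomial_function p"
    by (simp add: real_polynomial_function_eq)
  moreover have "p x0 \<noteq> 0"
    using indep by (auto simp: p_def det_Gram_eq_0_iff)
  moreover have "\<forall>j<s. c j = 0" if "p x \<noteq> 0" "(\<Sum>j<s. c j *\<^sub>R u j x) = 0" for x c
    using that by (auto simp: p_def det_Gram_eq_0_iff)
  ultimately show ?thesis
    by blast
qed

lemma dim_span_generic_ge:
  fixes G :: "('x::euclidean_space \<Rightarrow> 'a::euclidean_space) set"
  assumes "finite G" and poly: "\<And>g. g \<in> G \<Longrightarrow> polynomial_function g"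
  shows "\<exists>p::'x \<Rightarrow> real. polynomial_function p \<and> p x0 \<noteq> 0 \<and>
    (\<forall>x. p x \<noteq> 0 \<longrightarrow> dim (span ((\<lambda>g. g x0) ` G)) \<le> dim (span ((\<lambda>g. g x) ` G)))"
proof -
  obtain B where B: "B \<subseteq> (\<lambda>g. g x0) ` G" "independent B" "(\<lambda>g. g x0) ` G \<subseteq> span B"
    using maximal_independent_subset by blast
  obtain J where J: "J \<subseteq> G" "inj_on (\<lambda>g. g x0) J" "B = (\<lambda>g. g x0) ` J"
    using B(1) subset_image_inj by metis
  define s where "s = card J"
  have "finite J"
    using J(1) \<open>finite G\<close> finite_subset by blast
  then obtain e where e: "bij_betw e {..<s} J"
    using ex_bij_betw_nat_finite unfolding s_def atLeast0LessThan by blast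
  then have J_eq: "J = e ` {..<s}"
    by (simp add: bij_betw_def)
  have dim0: "dim (span ((\<lambda>g. g x0) ` G)) = s"
  proof -
    have "span ((\<lambda>g. g x0) ` G) = span B"
      using B by (metis span_mono span_span subset_antisym span_minimal subspace_span)
    then show ?thesis
      using B(2) J(2,3) by (simp add: dim_eq_card_independent card_image s_def)
  qed
  have "(\<lambda>k. e k x0) ` {..<s} = B"
    using J(3) by (simp add: J_eq image_image)
  moreover have "inj_on (\<lambda>k. e k x0) {..<s}"
    using comp_inj_on[of e "{..<s}" "\<lambda>g. g x0"] e J(2) by (simp add: bij_betw_def o_def)
  ultimately have indep0: "\<And>c. (\<Sum>k<s. c k *\<^sub>R e k x0) = 0 \<Longrightarrow> \<forall>k<s. c k = 0"
    using inj_on_independent_image_iff[of "\<lambda>k. e k x0" s] B(2) by auto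
  have poly_e: "\<And>k. k < s \<Longrightarrow> polynomial_function (e k)"
    using J(1) poly by (auto simp: J_eq)
  have "\<exists>p::_ \<Rightarrow> real. polynomial_function p \<and> p x0 \<noteq> 0 \<and>
      (\<forall>x c. p x \<noteq> 0 \<longrightarrow> (\<Sum>k<s. c k *\<^sub>R e k x) = 0 \<longrightarrow> (\<forall>k<s. c k = 0))"
    by (rule generic_linear_independence) (use poly_e indep0 in blast)+
  then obtain p :: "'x \<Rightarrow> real" where p: "polynomial_function p" "p x0 \<noteq> 0"
    "\<forall>x c. p x \<noteq> 0 \<longrightarrow> (\<Sum>k<s. c k *\<^sub>R e k x) = 0 \<longrightarrow> (\<forall>k<s. c k = 0)"
    by blast
  have "dim (span ((\<lambda>g. g x0) ` G)) \<le> dim (span ((\<lambda>g. g x) ` G))" if "p x \<noteq> 0" for x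
  proof -
    have "\<forall>c. (\<Sum>k<s. c k *\<^sub>R e k x) = 0 \<longrightarrow> (\<forall>k<s. c k = 0)"
      using p(3) that by blast
    then have inj: "inj_on (\<lambda>k. e k x) {..<s}" and ind: "independent ((\<lambda>k. e k x) ` {..<s})"
      using inj_on_independent_image_iff[of "\<lambda>k. e k x" s] by blast+
    have "(\<lambda>k. e k x) ` {..<s} \<subseteq> span ((\<lambda>g. g x) ` G)"
      using J(1) by (auto simp: J_eq intro!: span_base)
    then have "card ((\<lambda>k. e k x) ` {..<s}) \<le> dim (span ((\<lambda>g. g x) ` G))"
      using ind by (rule independent_card_le_dim)
    then show ?thesis
      using dim0 by (simp add: card_image[OF inj])
  qed
  with p(1,2) show ?thesis
    by blast
qed

subsection \<open>Skew-orthogonal complements\<close>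

definition skew_orthogonal :: "('a::euclidean_space \<Rightarrow> 'a \<Rightarrow> 'a) \<Rightarrow> 'a \<Rightarrow> 'a set \<Rightarrow> 'a set" where
  "skew_orthogonal B x W = {\<xi>. \<forall>w\<in>W. x \<bullet> B \<xi> w = 0}"

text \<open>The vector representing \<open>\<xi> \<mapsto> x \<bullet> B \<xi> w\<close>; it turns skew-orthogonality into
  ordinary orthogonality.\<close>

definition skew_dual :: "('a::euclidean_space \<Rightarrow> 'a \<Rightarrow> 'a) \<Rightarrow> 'a \<Rightarrow> 'a \<Rightarrow> 'a" where
  "skew_dual B x w = (\<Sum>c\<in>Basis. (x \<bullet> B c w) *\<^sub>R c)"

lemma bilinear_inner_left_comp:
  assumes "bilinear B"
  shows "bilinear (\<lambda>a b. x \<bullet> B a b)"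
  unfolding bilinear_def
  by (auto intro!: linearI simp: bilinear_ladd[OF assms] bilinear_radd[OF assms]
      bilinear_lmul[OF assms] bilinear_rmul[OF assms] inner_add_right)

lemma alternating_bilinear_skew:
  assumes B: "bilinear B" and alt: "\<And>y. B y y = 0"
  shows "B a b = - B b a"
proof -
  have "B a b + B b a = B (a + b) (a + b)"
    by (simp add: bilinear_ladd[OF B] bilinear_radd[OF B] alt[of a] alt[of b])
  then have "B a b + B b a = 0"
    by (simp only: alt)
  then show ?thesis by (simp add: eq_neg_iff_add_eq_0)
qed

lemma inner_skew_dual:
  assumes "bilinear B"
  shows "skew_dual B x w \<bullet> \<xi> = x \<bullet> B \<xi> w"
proof -
  have "linear (\<lambda>a. x \<bullet> B a w)"
    using bilinear_inner_left_comp[OF assms] by (simp add: bilinear_def)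
  from linear_eq_inner_Basis_sum[OF this, of \<xi>] show ?thesis
    by (simp add: skew_dual_def)
qed

lemma isotropic_span:
  assumes B: "bilinear B" and S: "\<And>a c. a \<in> S \<Longrightarrow> c \<in> S \<Longrightarrow> x \<bullet> B a c = 0"
  shows "isotropic B x (span S)"
  unfolding isotropic_def
proof (intro ballI)
  fix a c assume "a \<in> span S" "c \<in> span S"
  have "bilinear (\<lambda>a c. 0::real)"
    by (simp add: bilinear_def linear_zero)
  with \<open>a \<in> span S\<close> \<open>c \<in> span S\<close> S show "x \<bullet> B a c = 0"
    using bilinear_eq[OF bilinear_inner_left_comp[OF B, of x], of "\<lambda>a c. 0" "span S" S "span S" S a c]
    by simp
qed

lemma isotropic_iff_subset_skew_orthogonal:
  "isotropic B x W \<longleftrightarrow> W \<subseteq> skew_orthogonal B x W"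
  by (auto simp: isotropic_def skew_orthogonal_def)

lemma subspace_skew_orthogonal:
  assumes "bilinear B"
  shows "subspace (skew_orthogonal B x W)"
  unfolding subspace_def skew_orthogonal_def
  by (auto simp: bilinear_ladd[OF assms] bilinear_lmul[OF assms] bilinear_lzero[OF assms] inner_add_right)

lemma skew_orthogonal_span:
  assumes "bilinear B"
  shows "skew_orthogonal B x (span S) = skew_orthogonal B x S"
proof -
  have "x \<bullet> B \<xi> w = 0" if "\<forall>w\<in>S. x \<bullet> B \<xi> w = 0" "w \<in> span S" for \<xi> w
  proof -
    have "linear (\<lambda>w. x \<bullet> B \<xi> w)"
      using bilinear_inner_left_comp[OF assms] by (simp add: bilinear_def)
    from linear_eq_0_on_span[OF this _ that(2)] that(1) show ?thesis by blast
  qed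
  then show ?thesis
    unfolding skew_orthogonal_def by (blast intro: span_base)
qed

lemma skew_orthogonal_span_eq:
  assumes "bilinear B"
  shows "skew_orthogonal B x (span S) = {\<xi>. \<forall>z\<in>span (skew_dual B x ` S). orthogonal z \<xi>}"
proof -
  have "skew_orthogonal B x S = {\<xi>. \<forall>w\<in>S. orthogonal (skew_dual B x w) \<xi>}"
    by (simp add: skew_orthogonal_def real_inner_class.orthogonal_def inner_skew_dual[OF assms])
  also have "\<dots> = {\<xi>. \<forall>z\<in>span (skew_dual B x ` S). orthogonal z \<xi>}"
  proof (intro Collect_cong iffI ballI)
    fix \<xi> z
    assume \<xi>: "\<forall>w\<in>S. orthogonal (skew_dual B x w) \<xi>" and "z \<in> span (skew_dual B x ` S)"
    have "orthogonal \<xi> y" if "y \<in> skew_dual B x ` S" for y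
      using \<xi> that orthogonal_commute by blast
    with \<open>z \<in> span (skew_dual B x ` S)\<close> have "orthogonal \<xi> z"
      by (rule orthogonal_to_span)
    then show "orthogonal z \<xi>"
      by (simp add: orthogonal_commute)
  next
    fix \<xi> w
    assume "\<forall>z\<in>span (skew_dual B x ` S). orthogonal z \<xi>" and "w \<in> S"
    then show "orthogonal (skew_dual B x w) \<xi>"
      by (simp add: span_base)
  qed
  finally show ?thesis
    by (simp add: skew_orthogonal_span[OF assms])
qed

lemma dim_skew_orthogonal_span:
  fixes B :: "'a::euclidean_space \<Rightarrow> 'a \<Rightarrow> 'a"
  assumes "bilinear B"
  shows "dim (skew_orthogonal B x (span S)) + dim (span (skew_dual B x ` S)) = DIM('a)"
  using dim_subspace_orthogonal_to_vectors[of "span (skew_dual B x ` S)" UNIV]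
  by (simp add: skew_orthogonal_span_eq[OF assms])

lemma polynomial_function_skew_dual:
  assumes "bilinear B" and "polynomial_function g"
  shows "polynomial_function (\<lambda>x. skew_dual B x (g x))"
proof -
  have "polynomial_function (\<lambda>x. (x \<bullet> B c (g x)) *\<^sub>R c)" for c
    using polynomial_function_inner_fun[OF polynomial_function_id
        polynomial_function_bilinear[OF assms(1) polynomial_function_const assms(2)]]
    by (rule polynomial_function_mult) simp
  then show ?thesis
    unfolding skew_dual_def by (intro polynomial_function_sum) auto
qed

lemma maximal_isotropic_if_skew_orthogonal_subset:
  assumes "subspace W" "isotropic B x W" "skew_orthogonal B x W \<subseteq> W"
  shows "maximal_isotropic B UNIV x W"
  unfolding maximal_isotropic_def
proof (intro conjI allI impI)
  fix U assume U: "subspace U \<and> W \<subseteq> U \<and> U \<subseteq> UNIV \<and> isotropic B x U"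
  then have "U \<subseteq> skew_orthogonal B x W"
    by (auto simp: isotropic_def skew_orthogonal_def)
  with U assms(3) show "U = W" by blast
qed (use assms in auto)

lemma maximal_isotropic_absorb:
  assumes B: "bilinear B" and alt: "\<And>y. B y y = 0" and "subspace L"
    and max: "maximal_isotropic B L x W" and "X \<in> L" and "X \<in> skew_orthogonal B x W"
  shows "X \<in> W"
proof -
  have W: "subspace W" "W \<subseteq> L" "isotropic B x W"
    using max by (auto simp: maximal_isotropic_def)
  have orth: "x \<bullet> B X w = 0" if "w \<in> W" for w
    using \<open>X \<in> skew_orthogonal B x W\<close> that by (simp add: skew_orthogonal_def)
  have "isotropic B x (span (insert X W))"
  proof (rule isotropic_span[OF B])
    fix s t assume "s \<in> insert X W" "t \<in> insert X W"
    then show "x \<bullet> B s t = 0"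
      using W(3) alt orth alternating_bilinear_skew[OF B alt, of s X]
      by (auto simp: isotropic_def)
  qed
  moreover have "span (insert X W) \<subseteq> L"
    using W(2) \<open>X \<in> L\<close> \<open>subspace L\<close> by (simp add: span_minimal)
  moreover have "W \<subseteq> span (insert X W)"
    by (meson span_superset subset_insertI subset_trans)
  ultimately have "span (insert X W) = W"
    using max subspace_span unfolding maximal_isotropic_def by blast
  then show ?thesis by (metis insertI1 span_base)
qed

text \<open>Off the zero sets of two polynomials, the rank of the family can only go up and the
  dimension of its skew-orthogonal can only go down; so equality at one point propagates.\<close>

lemma generic_maximal_isotropic_span:
  fixes B :: "'a::euclidean_space \<Rightarrow> 'a \<Rightarrow> 'a" and G :: "('a \<Rightarrow> 'a) set"
  assumes B: "bilinear B" and G: "finite G" "\<And>g. g \<in> G \<Longrightarrow> polynomial_function g"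
    and iso: "\<And>x. isotropic B x (span ((\<lambda>g. g x) ` G))"
    and x0: "skew_orthogonal B x0 (span ((\<lambda>g. g x0) ` G)) \<subseteq> span ((\<lambda>g. g x0) ` G)"
  shows "generic_on UNIV (\<lambda>x. maximal_isotropic B UNIV x (span ((\<lambda>g. g x) ` G)))"
proof -
  have "\<exists>p::_ \<Rightarrow> real. polynomial_function p \<and> p x0 \<noteq> 0 \<and>
      (\<forall>x. p x \<noteq> 0 \<longrightarrow> dim (span ((\<lambda>g. g x0) ` G)) \<le> dim (span ((\<lambda>g. g x) ` G)))"
    by (rule dim_span_generic_ge) (use G in blast)+
  then obtain p1 :: "'a \<Rightarrow> real" where p1: "polynomial_function p1" "p1 x0 \<noteq> 0"
    "\<forall>x. p1 x \<noteq> 0 \<longrightarrow> dim (span ((\<lambda>g. g x0) ` G)) \<le> dim (span ((\<lambda>g. g x) ` G))"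
    by blast
  define G' where "G' = (\<lambda>g x. skew_dual B x (g x)) ` G"
  have G': "finite G'" "\<And>h. h \<in> G' \<Longrightarrow> polynomial_function h"
    using G polynomial_function_skew_dual[OF B] by (auto simp: G'_def)
  have "\<exists>p::_ \<Rightarrow> real. polynomial_function p \<and> p x0 \<noteq> 0 \<and>
      (\<forall>x. p x \<noteq> 0 \<longrightarrow> dim (span ((\<lambda>h. h x0) ` G')) \<le> dim (span ((\<lambda>h. h x) ` G')))"
    by (rule dim_span_generic_ge) (use G' in blast)+
  then obtain p2 :: "'a \<Rightarrow> real" where p2: "polynomial_function p2" "p2 x0 \<noteq> 0"
    "\<forall>x. p2 x \<noteq> 0 \<longrightarrow> dim (span ((\<lambda>h. h x0) ` G')) \<le> dim (span ((\<lambda>h. h x) ` G'))"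
    by blast
  define W where "W x = span ((\<lambda>g. g x) ` G)" for x
  have dim_sum: "dim (skew_orthogonal B x (W x)) + dim (span ((\<lambda>h. h x) ` G')) = DIM('a)" for x
    using dim_skew_orthogonal_span[OF B, of x "(\<lambda>g. g x) ` G"] by (simp add: W_def G'_def image_image)
  have max: "maximal_isotropic B UNIV x (W x)" if "p1 x \<noteq> 0" "p2 x \<noteq> 0" for x
  proof -
    have "dim (skew_orthogonal B x (W x)) \<le> dim (skew_orthogonal B x0 (W x0))"
      using dim_sum[of x] dim_sum[of x0] p2(3)[rule_format, OF that(2)] by linarith
    also have "\<dots> \<le> dim (W x0)"
      using dim_subset[OF x0] by (simp add: W_def)
    also have "\<dots> \<le> dim (W x)"
      using p1(3)[rule_format, OF that(1)] by (simp add: W_def)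
    finally have "W x = skew_orthogonal B x (W x)"
      using subspace_dim_equal[of "W x" "skew_orthogonal B x (W x)"] iso[of x]
      by (simp add: W_def subspace_skew_orthogonal[OF B] isotropic_iff_subset_skew_orthogonal)
    then show ?thesis
      using iso[of x] by (intro maximal_isotropic_if_skew_orthogonal_subset) (auto simp: W_def)
  qed
  show ?thesis
    unfolding generic_on_def
  proof (intro exI[of _ "\<lambda>x. p1 x * p2 x"] conjI bexI[of _ x0] ballI impI)
    show "polynomial_function (\<lambda>x. p1 x * p2 x)"
      using polynomial_function_mult[OF p1(1) p2(1)] by simp
  qed (use p1(2) p2(2) max in \<open>auto simp: W_def\<close>)
qed

subsection \<open>Semidirect sums and stabilisers\<close>

lemma mem_stab_iff:
  assumes "lie_rep br \<rho>"
  shows "X \<in> stab \<rho> v \<longleftrightarrow> (\<forall>a. v \<bullet> \<rho> X a = 0)"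
proof -
  have "linear (\<rho> X)" using assms by (simp add: lie_rep_def)
  have "X \<in> stab \<rho> v \<longleftrightarrow> (\<forall>a. a \<bullet> adjoint (\<rho> X) v = 0)"
    by (simp add: stab_def dual_rep_def) (metis inner_eq_zero_iff inner_zero_right)
  also have "\<dots> \<longleftrightarrow> (\<forall>a. v \<bullet> \<rho> X a = 0)"
    by (simp add: adjoint_works[OF \<open>linear (\<rho> X)\<close>] inner_commute)
  finally show ?thesis .
qed

lemma mem_stabD:
  "lie_rep br \<rho> \<Longrightarrow> X \<in> stab \<rho> v \<Longrightarrow> v \<bullet> \<rho> X a = 0"
  using mem_stab_iff by blast

lemma subspace_stab:
  assumes "lie_rep br \<rho>"
  shows "subspace (stab \<rho> v)"
proof -
  have l: "linear (\<lambda>X. \<rho> X a)" for a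
    using assms by (simp add: lie_rep_def)
  show ?thesis
    unfolding subspace_def
    by (auto simp: mem_stab_iff[OF assms] linear_add[OF l] linear_scale[OF l] linear_0[OF l] inner_add_right)
qed

lemma stab_bracket_closed:
  assumes "lie_rep br \<rho>" "X \<in> stab \<rho> v" "Y \<in> stab \<rho> v"
  shows "br X Y \<in> stab \<rho> v"
  using assms unfolding mem_stab_iff[OF assms(1)] lie_rep_def by (simp add: inner_diff_right)

lemma bilinear_sd_br:
  assumes b: "bilinear br" and rep: "lie_rep br \<rho>"
  shows "bilinear (sd_br br \<rho>)"
proof -
  have l1: "linear (\<rho> X)" and l2: "linear (\<lambda>X. \<rho> X a)" for X a
    using rep by (auto simp: lie_rep_def)
  show ?thesis
    unfolding bilinear_def sd_br_def
    by (auto intro!: linearI simp: bilinear_ladd[OF b] bilinear_radd[OF b] bilinear_lmul[OF b]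
        bilinear_rmul[OF b] linear_add[OF l1] linear_add[OF l2] linear_scale[OF l1]
        linear_scale[OF l2] scaleR_diff_right)
qed

lemma inner_sd_br:
  "x \<bullet> sd_br br \<rho> \<xi> \<eta> = fst x \<bullet> br (fst \<xi>) (fst \<eta>) + snd x \<bullet> \<rho> (fst \<xi>) (snd \<eta>) - snd x \<bullet> \<rho> (fst \<eta>) (snd \<xi>)"
  by (simp add: sd_br_def inner_prod_def inner_diff_right)

lemma decompose_subspace_annihilator:
  fixes S :: "'a::euclidean_space set"
  assumes "subspace S"
  obtains y L where "y \<in> S" "L \<in> annihilator S" "M = y + L"
proof -
  obtain y L where "y \<in> span S" "\<And>w. w \<in> span S \<Longrightarrow> orthogonal L w" "M = y + L"
    using orthogonal_subspace_decomp_exists by blast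
  moreover have "span S = S"
    using assms by (simp add: span_eq_iff)
  ultimately show ?thesis
    using that[of y L] by (simp add: annihilator_def real_inner_class.orthogonal_def)
qed

lemma grad_mem_if_annihilator_invariant:
  fixes g :: "'a::euclidean_space \<Rightarrow> real"
  assumes S: "subspace S" and d: "(g has_derivative (\<lambda>h. grad g M \<bullet> h)) (at M)"
    and inv: "\<And>M L. L \<in> annihilator S \<Longrightarrow> g M = g (M + L)"
  shows "grad g M \<in> S"
proof -
  have orth: "grad g M \<bullet> L = 0" if L: "L \<in> annihilator S" for L
  proof -
    have line: "((\<lambda>t::real. M + t *\<^sub>R L) has_derivative (\<lambda>t. t *\<^sub>R L)) (at 0)"
      by (auto intro!: derivative_eq_intros)
    have "(g has_derivative (\<lambda>h. grad g M \<bullet> h)) (at ((\<lambda>t::real. M + t *\<^sub>R L) 0))"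
      using d by simp
    from diff_chain_at[OF line this]
    have "((\<lambda>t. g (M + t *\<^sub>R L)) has_derivative (\<lambda>t. grad g M \<bullet> (t *\<^sub>R L))) (at 0)"
      by (simp add: o_def)
    moreover have "g (M + t *\<^sub>R L) = g M" for t
      using inv[of "t *\<^sub>R L" M] L by (simp add: annihilator_def)
    ultimately have "((\<lambda>t::real. g M) has_derivative (\<lambda>t. grad g M \<bullet> (t *\<^sub>R L))) (at 0)"
      by simp
    then have "(\<lambda>t. grad g M \<bullet> (t *\<^sub>R L)) = (\<lambda>t::real. 0)"
      using has_derivative_unique[OF _ has_derivative_const] by blast
    then show ?thesis
      using fun_cong[of _ _ 1] by fastforce
  qed
  obtain y L where y: "y \<in> S" and L: "L \<in> annihilator S" and eq: "grad g M = y + L"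
    using decompose_subspace_annihilator[OF S] by blast
  have "L \<bullet> y = 0"
    using L y by (simp add: annihilator_def)
  moreover have "(y + L) \<bullet> L = 0"
    using orth[OF L] eq by simp
  ultimately have "L = 0"
    by (simp add: inner_add_left inner_commute[of y L])
  with y eq show ?thesis by simp
qed

lemma grad_translate_annihilator:
  fixes g :: "'a::euclidean_space \<Rightarrow> real"
  assumes d: "(g has_derivative (\<lambda>h. grad g (M + L) \<bullet> h)) (at (M + L))"
    and inv: "\<And>M. g M = g (M + L)"
  shows "grad g (M + L) = grad g M"
proof -
  have "((\<lambda>z. z + L) has_derivative (\<lambda>h. h)) (at M)"
    by (auto intro!: derivative_eq_intros)
  from diff_chain_at[OF this d] have "(g has_derivative (\<lambda>h. grad g (M + L) \<bullet> h)) (at M)"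
    by (simp add: o_def flip: inv)
  then show ?thesis by (rule grad_eqI[symmetric])
qed

subsection \<open>The invariant family\<close>

locale invariant_family =
  fixes br :: "'k::euclidean_space \<Rightarrow> 'k \<Rightarrow> 'k"
    and \<rho> :: "'k \<Rightarrow> 'v::euclidean_space \<Rightarrow> 'v"
    and f :: "nat \<Rightarrow> 'k \<times> 'v \<Rightarrow> real"
    and l :: nat
  assumes lie: "lie_algebra br"
    and rep: "lie_rep br \<rho>"
    and poly: "\<And>i. i < l \<Longrightarrow> polynomial_function (f i)"
    and invariant: "\<And>i M v L. i < l \<Longrightarrow> L \<in> annihilator (stab \<rho> v) \<Longrightarrow> f i (M, v) = f i (M + L, v)"
    and generic: "generic_on UNIV (\<lambda>v. complete_comm_set br (stab \<rho> v) ((\<lambda>i M. f i (M, v)) ` {..<l}))"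
begin

definition family :: "('k \<times> 'v \<Rightarrow> real) set" where
  "family = f ` {..<l} \<union> (\<lambda>a x. snd x \<bullet> a) ` UNIV"

definition gradient_generators :: "('k \<times> 'v \<Rightarrow> 'k \<times> 'v) set" where
  "gradient_generators = (\<lambda>i. grad (f i)) ` {..<l} \<union> (\<lambda>c x. (0, c)) ` Basis"

lemma bilinear_br: "bilinear br"
  using lie by (simp add: lie_algebra_def)

lemma br_self: "br X X = 0"
  using lie by (simp add: lie_algebra_def)

lemma br_zero [simp]: "br 0 X = 0" "br X 0 = 0"
  by (simp_all add: bilinear_lzero[OF bilinear_br] bilinear_rzero[OF bilinear_br])

lemma rep_zero [simp]: "\<rho> 0 a = 0" "\<rho> X 0 = 0"
proof -
  have "linear (\<lambda>X. \<rho> X a)" "linear (\<rho> X)"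
    using rep by (simp_all add: lie_rep_def)
  from linear_0[OF this(1)] linear_0[OF this(2)] show "\<rho> 0 a = 0" "\<rho> X 0 = 0"
    by simp_all
qed

lemma has_derivative_grad_restrict:
  assumes "i < l"
  shows "((\<lambda>M. f i (M, v)) has_derivative (\<lambda>h. grad (\<lambda>M. f i (M, v)) M \<bullet> h)) (at M)"
  using has_derivative_fst_grad[OF poly[OF assms]] by (simp add: grad_Pair_fst[OF poly[OF assms]])

lemma grad_fst_mem_stab:
  assumes "i < l"
  shows "fst (grad (f i) (M, v)) \<in> stab \<rho> v"
proof -
  have "grad (\<lambda>M. f i (M, v)) M \<in> stab \<rho> v"
    by (rule grad_mem_if_annihilator_invariant[OF subspace_stab[OF rep] has_derivative_grad_restrict[OF assms]])
      (rule invariant[OF assms])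
  then show ?thesis
    by (simp add: grad_Pair_fst[OF poly[OF assms]])
qed

lemma grad_fst_translate:
  assumes "i < l" "L \<in> annihilator (stab \<rho> v)"
  shows "fst (grad (f i) (M + L, v)) = fst (grad (f i) (M, v))"
proof -
  have "grad (\<lambda>M. f i (M, v)) (M + L) = grad (\<lambda>M. f i (M, v)) M"
    by (rule grad_translate_annihilator[OF has_derivative_grad_restrict[OF assms(1)]])
      (rule invariant[OF assms])
  then show ?thesis
    by (simp add: grad_Pair_fst[OF poly[OF assms(1)]])
qed

lemma bracket_fst_grad_eq_0_if_complete:
  assumes ij: "i < l" "j < l"
    and ccs: "complete_comm_set br (stab \<rho> v) ((\<lambda>i M. f i (M, v)) ` {..<l})"
  shows "M \<bullet> br (fst (grad (f i) (M, v))) (fst (grad (f j) (M, v))) = 0"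
proof -
  obtain y L where y: "y \<in> stab \<rho> v" and L: "L \<in> annihilator (stab \<rho> v)" and "M = y + L"
    using decompose_subspace_annihilator[OF subspace_stab[OF rep]] by blast
  let ?X = "\<lambda>i. fst (grad (f i) (y, v))"
  have "M \<bullet> br (fst (grad (f i) (M, v))) (fst (grad (f j) (M, v))) =
      y \<bullet> br (?X i) (?X j) + L \<bullet> br (?X i) (?X j)"
    using ij L by (simp add: \<open>M = y + L\<close> grad_fst_translate inner_add_left)
  moreover have "L \<bullet> br (?X i) (?X j) = 0"
    using L stab_bracket_closed[OF rep grad_fst_mem_stab[OF ij(1)] grad_fst_mem_stab[OF ij(2)]]
    by (auto simp: annihilator_def)
  moreover have "(\<lambda>M. f i (M, v)) \<in> (\<lambda>i M. f i (M, v)) ` {..<l}" "(\<lambda>M. f j (M, v)) \<in> (\<lambda>i M. f i (M, v)) ` {..<l}"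
    using ij by auto
  with ccs y have "lp_bracket br (\<lambda>M. f i (M, v)) (\<lambda>M. f j (M, v)) y = 0"
    unfolding complete_comm_set_def by blast
  then have "y \<bullet> br (?X i) (?X j) = 0"
    using ij by (simp add: lp_bracket_def grad_Pair_fst poly)
  ultimately show ?thesis by simp
qed

text \<open>Only the \<open>k\<close>-part of the bracket survives, since both \<open>k\<close>-components lie in \<open>St(v)\<close>;
  it is a polynomial in \<open>(M, v)\<close> that vanishes for generic \<open>v\<close>.\<close>

lemma invariants_commute:
  assumes ij: "i < l" "j < l"
  shows "x \<bullet> sd_br br \<rho> (grad (f i) x) (grad (f j) x) = 0"
proof -
  define Q where "Q z = fst z \<bullet> br (fst (grad (f i) z)) (fst (grad (f j) z))" for z
  have fst_grad: "polynomial_function (\<lambda>z. fst (grad (f k) z))" if "k < l" for k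
    using polynomial_function_compose[OF polynomial_function_grad[OF poly[OF that]]
        polynomial_function_bounded_linear[OF bounded_linear_fst]]
    by (simp add: o_def)
  have "polynomial_function Q"
    unfolding Q_def
    by (rule polynomial_function_inner_fun[OF polynomial_function_bounded_linear[OF bounded_linear_fst]
          polynomial_function_bilinear[OF bilinear_br fst_grad[OF ij(1)] fst_grad[OF ij(2)]]])
  moreover have "generic_on UNIV (\<lambda>z. Q z = 0)"
  proof (rule generic_on_mono[OF generic_on_UNIV_snd[OF generic]])
    fix z :: "'k \<times> 'v"
    assume "complete_comm_set br (stab \<rho> (snd z)) ((\<lambda>i M. f i (M, snd z)) ` {..<l})"
    from bracket_fst_grad_eq_0_if_complete[OF ij this, of "fst z"] show "Q z = 0"
      by (simp add: Q_def)
  qed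
  ultimately have "Q x = 0"
    by (rule polynomial_function_eq_0_if_generic_on)
  then show ?thesis
    using grad_fst_mem_stab[OF ij(1), of "fst x" "snd x"] grad_fst_mem_stab[OF ij(2), of "fst x" "snd x"]
    by (simp add: Q_def inner_sd_br mem_stabD[OF rep])
qed

lemma grad_linear_mem_family: "(0, c) \<in> (\<lambda>g. grad g x) ` family"
proof (rule image_eqI)
  show "(0, c) = grad (\<lambda>x. snd x \<bullet> c) x"
    by (simp add: grad_inner_snd)
  show "(\<lambda>x. snd x \<bullet> c) \<in> family"
    unfolding family_def by blast
qed

lemma family_commute:
  assumes "g \<in> family" "h \<in> family"
  shows "x \<bullet> sd_br br \<rho> (grad g x) (grad h x) = 0"
proof -
  have grad_cases: "(\<exists>i<l. grad k x = grad (f i) x) \<or> (\<exists>a. grad k x = (0, a))" if "k \<in> family" for k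
    using that by (auto simp: family_def grad_inner_snd)
  have "x \<bullet> sd_br br \<rho> (grad (f i) x) (0, a) = 0" "x \<bullet> sd_br br \<rho> (0, a) (grad (f i) x) = 0"
    if "i < l" for i a
    using grad_fst_mem_stab[OF that, of "fst x" "snd x"] by (simp_all add: inner_sd_br mem_stabD[OF rep])
  moreover have "x \<bullet> sd_br br \<rho> (0, a) (0, c) = 0" for a c
    by (simp add: inner_sd_br)
  moreover have "x \<bullet> sd_br br \<rho> (grad (f i) x) (grad (f j) x) = 0" if "i < l" "j < l" for i j
    using that by (rule invariants_commute)
  ultimately show ?thesis
    using grad_cases[OF assms(1)] grad_cases[OF assms(2)] by auto
qed

lemma polynomial_function_family: "g \<in> family \<Longrightarrow> polynomial_function g"
  unfolding family_def
  using poly polynomial_function_bounded_linear[OF bounded_linear_compose[OF bounded_linear_inner_left bounded_linear_snd]]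
  by auto

lemma span_grad_family:
  "span ((\<lambda>g. grad g x) ` family) = span ((\<lambda>g. g x) ` gradient_generators)"
proof -
  have "(0, a) \<in> span ((\<lambda>g. g x) ` gradient_generators)" for a :: 'v
  proof -
    have "(0, a) = (\<Sum>c\<in>Basis. (a \<bullet> c) *\<^sub>R (0::'k, c))"
      by (simp add: prod_eq_iff fst_sum snd_sum euclidean_representation)
    also have "\<dots> \<in> span ((\<lambda>g. g x) ` gradient_generators)"
      by (intro span_sum span_scale span_base) (auto simp: gradient_generators_def)
    finally show ?thesis .
  qed
  moreover have "(0, c) \<in> span ((\<lambda>g. grad g x) ` family)" for c
    using grad_linear_mem_family by (rule span_base)
  ultimately show ?thesis
    unfolding span_eq
    by (auto simp: family_def gradient_generators_def grad_inner_snd intro: span_base)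
qed

lemma Pair_zero_mem_span_grad_family:
  assumes "X \<in> span ((\<lambda>i. fst (grad (f i) x)) ` {..<l})"
  shows "(X, 0) \<in> span ((\<lambda>g. grad g x) ` family)"
proof -
  let ?W = "span ((\<lambda>g. grad g x) ` family)"
  have "subspace ((\<lambda>X. (X, 0::'v)) -` ?W)"
    by (intro linear_subspace_vimage linearI) simp_all
  moreover have "(fst (grad (f i) x), 0) \<in> ?W" if "i < l" for i
  proof -
    obtain X Y where XY: "grad (f i) x = (X, Y)" by fastforce
    have "grad (f i) x \<in> ?W"
      using that by (auto simp: family_def intro!: span_base)
    with span_diff[OF this span_base[OF grad_linear_mem_family[of Y]]] show ?thesis
      by (simp add: XY)
  qed
  ultimately show ?thesis
    using assms span_minimal[of "(\<lambda>i. fst (grad (f i) x)) ` {..<l}" "(\<lambda>X. (X, 0)) -` ?W"] by auto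
qed

lemma skew_orthogonal_grad_span_subset:
  assumes max: "maximal_isotropic br (stab \<rho> v) y (span ((\<lambda>i. fst (grad (f i) (y, v))) ` {..<l}))"
  defines "W \<equiv> span ((\<lambda>g. grad g (y, v)) ` family)"
  shows "skew_orthogonal (sd_br br \<rho>) (y, v) W \<subseteq> W"
proof
  fix \<xi> assume \<xi>: "\<xi> \<in> skew_orthogonal (sd_br br \<rho>) (y, v) W"
  obtain X a where \<xi>_eq: "\<xi> = (X, a)" by fastforce
  have V_W: "(0, c) \<in> W" for c
    unfolding W_def using grad_linear_mem_family by (rule span_base)
  have "X \<in> stab \<rho> v"
    unfolding mem_stab_iff[OF rep]
  proof
    fix c
    have "(y, v) \<bullet> sd_br br \<rho> \<xi> (0, c) = 0"
      using \<xi> V_W[of c] by (auto simp: skew_orthogonal_def)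
    then show "v \<bullet> \<rho> X c = 0"
      by (simp add: \<xi>_eq inner_sd_br)
  qed
  moreover have "y \<bullet> br X (fst (grad (f i) (y, v))) = 0" if "i < l" for i
  proof -
    have "grad (f i) (y, v) \<in> W"
      using that by (auto simp: W_def family_def intro!: span_base)
    then have "(y, v) \<bullet> sd_br br \<rho> \<xi> (grad (f i) (y, v)) = 0"
      using \<xi> by (auto simp: skew_orthogonal_def)
    then show ?thesis
      using grad_fst_mem_stab[OF that, of y v] \<open>X \<in> stab \<rho> v\<close>
      by (simp add: \<xi>_eq inner_sd_br mem_stabD[OF rep])
  qed
  then have "X \<in> skew_orthogonal br y ((\<lambda>i. fst (grad (f i) (y, v))) ` {..<l})"
    by (auto simp: skew_orthogonal_def)
  ultimately have "X \<in> span ((\<lambda>i. fst (grad (f i) (y, v))) ` {..<l})"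
    using maximal_isotropic_absorb[OF bilinear_br br_self subspace_stab[OF rep] max]
    by (simp add: skew_orthogonal_span[OF bilinear_br])
  then show "\<xi> \<in> W"
    using span_add[OF Pair_zero_mem_span_grad_family V_W[unfolded W_def, of a]]
    by (simp add: \<xi>_eq W_def)
qed

lemma skew_orthogonal_subset_at_some_point:
  obtains x0 where "skew_orthogonal (sd_br br \<rho>) x0 (span ((\<lambda>g. grad g x0) ` family))
    \<subseteq> span ((\<lambda>g. grad g x0) ` family)"
proof -
  obtain v where "complete_comm_set br (stab \<rho> v) ((\<lambda>i M. f i (M, v)) ` {..<l})"
    using generic unfolding generic_on_def by blast
  then obtain y
    where "maximal_isotropic br (stab \<rho> v) y (span ((\<lambda>g. grad g y) ` (\<lambda>i M. f i (M, v)) ` {..<l}))"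
    unfolding complete_comm_set_def generic_on_def by blast
  moreover have "(\<lambda>g. grad g y) ` (\<lambda>i M. f i (M, v)) ` {..<l} = (\<lambda>i. fst (grad (f i) (y, v))) ` {..<l}"
    unfolding image_image by (intro image_cong) (simp_all add: grad_Pair_fst poly)
  ultimately have "maximal_isotropic br (stab \<rho> v) y (span ((\<lambda>i. fst (grad (f i) (y, v))) ` {..<l}))"
    by metis
  then show ?thesis
    by (rule that[OF skew_orthogonal_grad_span_subset])
qed

theorem complete_comm_set_family: "complete_comm_set (sd_br br \<rho>) UNIV family"
  unfolding complete_comm_set_def
proof (intro conjI ballI)
  show "polynomial_function g" if "g \<in> family" for g
    using polynomial_function_family that .
  show "lp_bracket (sd_br br \<rho>) g h x = 0" if "g \<in> family" "h \<in> family" for g h x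
    using family_commute that by (simp add: lp_bracket_def)
  have B: "bilinear (sd_br br \<rho>)"
    using bilinear_sd_br[OF bilinear_br rep] .
  have "finite gradient_generators"
    by (simp add: gradient_generators_def)
  moreover have "polynomial_function g" if "g \<in> gradient_generators" for g
    using that poly polynomial_function_grad by (auto simp: gradient_generators_def)
  moreover have "isotropic (sd_br br \<rho>) x (span ((\<lambda>g. grad g x) ` family))" for x
  proof (rule isotropic_span[OF B])
    fix a c assume "a \<in> (\<lambda>g. grad g x) ` family" "c \<in> (\<lambda>g. grad g x) ` family"
    then obtain g h where "g \<in> family" "h \<in> family" "a = grad g x" "c = grad h x"
      by blast
    then show "x \<bullet> sd_br br \<rho> a c = 0"
      using family_commute by simp
  qed
  moreover obtain x0 where "skew_orthogonal (sd_br br \<rho>) x0 (span ((\<lambda>g. grad g x0) ` family))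
      \<subseteq> span ((\<lambda>g. grad g x0) ` family)"
    by (rule skew_orthogonal_subset_at_some_point) (rule that)
  ultimately show "generic_on UNIV (\<lambda>x. maximal_isotropic (sd_br br \<rho>) UNIV x (span ((\<lambda>g. grad g x) ` family)))"
    unfolding span_grad_family by (rule generic_maximal_isotropic_span[OF B])
qed

end

theorem lemma13:
  fixes br :: "'k::euclidean_space \<Rightarrow> 'k \<Rightarrow> 'k"
    and \<rho> :: "'k \<Rightarrow> 'v::euclidean_space \<Rightarrow> 'v"
    and f :: "nat \<Rightarrow> 'k \<times> 'v \<Rightarrow> real"
    and l :: nat
  assumes "lie_algebra br"
    and "lie_rep br \<rho>"
    and "\<forall>i<l. polynomial_function (f i)"
    and "\<forall>i<l. \<forall>M v L. L \<in> annihilator (stab \<rho> v) \<longrightarrow> f i (M, v) = f i (M + L, v)"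
    and "generic_on UNIV (\<lambda>v. complete_comm_set br (stab \<rho> v) ((\<lambda>i M. f i (M, v)) ` {..<l}))"
  shows "complete_comm_set (sd_br br \<rho>) UNIV
           (f ` {..<l} \<union> (\<lambda>a x. snd x \<bullet> a) ` UNIV)"
proof -
  interpret invariant_family br \<rho> f l
    unfolding invariant_family_def using assms by blast
  show ?thesis
    using complete_comm_set_family by (simp add: family_def)
qed

end
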